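(* Fix $k\ge1$. Let $\mathcal T_k$ be the set of self-avoiding walks on $\mathbb Z^2$ (including the empty walk) with North, East and South unit steps, starting at $(0,0)$ and confined to the strip $0\le y\le k$. For $w\in\mathcal T_k$ let $h(w)$ (resp. $h_c(w)$) be the number of horizontal steps at height different from $0$ and $k$ (resp. at height $0$ or $k$), and $v(w)$ (resp. $v_c(w)$) the number of vertical steps ending at height different from $0$ and $k$ (resp. ending at height $0$ or $k$). Let $$T_k(1)=\sum_{w\in\mathcal T_k}x^{h(w)}y^{v(w)}a^{h_c(w)}b^{v_c(w)}.$$ Then $T_k(1)=N_k/G_k$, where $N_k$, $G_k$ are defined by the recurrence $N_k=(1-x+y^2(1+x))N_{k-2}-y^2N_{k-4}$ (and the same recurrence for $G_k$) with initial conditions $N_{-1}=(1-x-xy)(b-y)/y^2$, $N_0=(b-xb+xy)/y$, $N_1=1+b$, $N_2=1-x+y+by(1+x)$, $G_0=(x-1)ab/y-(x+1)(a-1)$, $G_1=1-a-ab$, $G_2=(1-x)(1-a)-(x+1)yab$, $G_3=(1-x-xy)(1-a)-yab(x+y+xy)$; for $k\ge1$, $N_k$ and $G_k$ are polynomials in $x,y,a,b$. Equivalently, $$T_k(1)=\frac1{P(1/S)S^k+P(S)}\left(Q(1/S)S^k+Q(S)+(1-y^2)\frac{S^k-S}{S-1}\right),$$ where $S$ is the only power series in $x$ and $y$ satisfying $S+\frac1S=(1+x)y+(1-x)/y$, and $P(s)=1-a+aby-s(ab+y-ay)$, $Q(s)=1-by+(b-y)s$. *)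

theory Defs
  imports "HOL-Analysis.Analysis"
begin

datatype step = North | East | South

fun move :: "step \<Rightarrow> int \<times> int \<Rightarrow> int \<times> int" where
  "move North (i, j) = (i, j + 1)"
| "move East (i, j) = (i + 1, j)"
| "move South (i, j) = (i, j - 1)"

fun pts :: "int \<times> int \<Rightarrow> step list \<Rightarrow> (int \<times> int) list" where
  "pts p [] = [p]"
| "pts p (s # ws) = p # pts (move s p) ws"

definition walks :: "nat \<Rightarrow> step list set" where
  "walks k = {w. distinct (pts (0, 0) w) \<and>
                 (\<forall>q \<in> set (pts (0, 0) w). 0 \<le> snd q \<and> snd q \<le> int k)}"

definition steps_at :: "step list \<Rightarrow> (step \<times> (int \<times> int)) list" where
  "steps_at w = zip w (pts (0, 0) w)"

definition boundary :: "nat \<Rightarrow> int \<Rightarrow> bool" where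
  "boundary k j \<longleftrightarrow> j = 0 \<or> j = int k"

definition hstat :: "nat \<Rightarrow> step list \<Rightarrow> nat" where
  "hstat k w = length (filter (\<lambda>(s, p). s = East \<and> \<not> boundary k (snd p)) (steps_at w))"

definition hcstat :: "nat \<Rightarrow> step list \<Rightarrow> nat" where
  "hcstat k w = length (filter (\<lambda>(s, p). s = East \<and> boundary k (snd p)) (steps_at w))"

definition vstat :: "nat \<Rightarrow> step list \<Rightarrow> nat" where
  "vstat k w = length (filter (\<lambda>(s, p). s \<noteq> East \<and> \<not> boundary k (snd (move s p))) (steps_at w))"

definition vcstat :: "nat \<Rightarrow> step list \<Rightarrow> nat" where
  "vcstat k w = length (filter (\<lambda>(s, p). s \<noteq> East \<and> boundary k (snd (move s p))) (steps_at w))"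

text \<open>NN n = N_(n-1)  (index shifted by one so that N_(-1) is NN 0).\<close>
fun NN :: "real \<Rightarrow> real \<Rightarrow> real \<Rightarrow> real \<Rightarrow> nat \<Rightarrow> real" where
  "NN x y a b 0 = (1 - x - x*y) * (b - y) / y^2"
| "NN x y a b (Suc 0) = (b - x*b + x*y) / y"
| "NN x y a b (Suc (Suc 0)) = 1 + b"
| "NN x y a b (Suc (Suc (Suc 0))) = 1 - x + y + b*y*(1 + x)"
| "NN x y a b (Suc (Suc (Suc (Suc n)))) =
     (1 - x + y^2 * (1 + x)) * NN x y a b (Suc (Suc n)) - y^2 * NN x y a b n"

definition Nk :: "real \<Rightarrow> real \<Rightarrow> real \<Rightarrow> real \<Rightarrow> nat \<Rightarrow> real" where
  "Nk x y a b k = NN x y a b (Suc k)"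

fun Gk :: "real \<Rightarrow> real \<Rightarrow> real \<Rightarrow> real \<Rightarrow> nat \<Rightarrow> real" where
  "Gk x y a b 0 = (x - 1) * a * b / y - (x + 1) * (a - 1)"
| "Gk x y a b (Suc 0) = 1 - a - a*b"
| "Gk x y a b (Suc (Suc 0)) = (1 - x) * (1 - a) - (x + 1) * y * a * b"
| "Gk x y a b (Suc (Suc (Suc 0))) = (1 - x - x*y) * (1 - a) - y*a*b*(x + y + x*y)"
| "Gk x y a b (Suc (Suc (Suc (Suc n)))) =
     (1 - x + y^2 * (1 + x)) * Gk x y a b (Suc (Suc n)) - y^2 * Gk x y a b n"

definition Ppol :: "real \<Rightarrow> real \<Rightarrow> real \<Rightarrow> real \<Rightarrow> real" where
  "Ppol y a b s = 1 - a + a*b*y - s * (a*b + y - a*y)"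

definition Qpol :: "real \<Rightarrow> real \<Rightarrow> real \<Rightarrow> real" where
  "Qpol y b s = 1 - b*y + (b - y) * s"

end

theory Submission
  imports Defs
begin

text \<open>Let \<open>F\<^sub>j\<close> be the generating function of the walks started at height \<open>j\<close>, and \<open>P\<^sub>j\<close>, \<open>M\<^sub>j\<close>
  those of the walks whose first step is not South, resp. not North. Splitting off the first
  step gives a linear system in \<open>j\<close>. Up to a correction at the two boundary heights, \<open>F\<^sub>j\<close> then
  satisfies a three-term recurrence with constant coefficients and characteristic roots \<open>S\<close>,
  \<open>1/S\<close>, so \<open>F\<^sub>j = c + A S\<^sup>j + B S\<^sup>-\<^sup>j\<close>. Two boundary conditions at height \<open>0\<close>, and their mirror
  images under \<open>j \<mapsto> k - j\<close> at height \<open>k\<close>, determine \<open>F\<^sub>0\<close> as the stated expression in \<open>S\<close>. The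
  even and odd subsequences of \<open>N\<^sub>k\<close> and \<open>G\<^sub>k\<close> obey a recurrence with roots \<open>y S\<close> and \<open>y/S\<close>,
  which identifies \<open>N\<^sub>k/G\<^sub>k\<close> with the same expression. For small \<open>x, y, a, b\<close> the weights are
  dominated by a geometric series in the length, and \<open>|S| \<le> 1/50\<close> keeps all denominators away
  from zero.\<close>

section \<open>Self-avoiding walks in a strip\<close>

lemma pts_translate: "pts (i + d, j) w = map (\<lambda>(p, q). (p + d, q)) (pts (i, j) w)"
proof (induction w arbitrary: i j)
  case (Cons s w)
  show ?case
  proof (cases s)
    case East
    then show ?thesis
      using Cons.IH[of "i + 1" j] by (simp add: ac_simps)
  qed (use Cons.IH in simp_all)
qed simp

lemma fst_le_pts: "q \<in> set (pts p w) \<Longrightarrow> fst p \<le> fst q"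
proof (induction w arbitrary: p)
  case (Cons s w)
  obtain i j where "p = (i, j)"
    by force
  with Cons show ?case
    by (cases s) (auto dest!: Cons.IH)
qed simp

lemma start_in_pts: "p \<in> set (pts p w)"
  by (cases w) simp_all

text \<open>East steps never return to a column, so a self-avoiding walk visits its starting column
  in one vertical run at the start.\<close>

lemma distinct_pts_column_ge:
  assumes "distinct (pts (i, j) w)" "\<forall>w'. w \<noteq> South # w'" "(i, j') \<in> set (pts (i, j) w)"
  shows "j \<le> j'"
  using assms
proof (induction w arbitrary: j)
  case (Cons s w)
  show ?case
  proof (cases s)
    case North
    then have distinct: "distinct (pts (i, j + 1) w)" and "(i, j) \<notin> set (pts (i, j + 1) w)"
      using Cons.prems(1) by simp_all
    then have "\<forall>w'. w \<noteq> South # w'"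
      by (auto simp: start_in_pts)
    then show ?thesis
      using Cons.IH[OF distinct] Cons.prems(3) North by fastforce
  next
    case East
    then show ?thesis
      using Cons.prems(3) fst_le_pts[of "(i, j')" "(i + 1, j)" w] by auto
  next
    case South
    then show ?thesis
      using Cons.prems(2) by simp
  qed
qed simp

lemma distinct_pts_column_le:
  assumes "distinct (pts (i, j) w)" "\<forall>w'. w \<noteq> North # w'" "(i, j') \<in> set (pts (i, j) w)"
  shows "j' \<le> j"
  using assms
proof (induction w arbitrary: j)
  case (Cons s w)
  show ?case
  proof (cases s)
    case South
    then have distinct: "distinct (pts (i, j - 1) w)" and "(i, j) \<notin> set (pts (i, j - 1) w)"
      using Cons.prems(1) by simp_all
    then have "\<forall>w'. w \<noteq> North # w'"
      by (auto simp: start_in_pts)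
    then show ?thesis
      using Cons.IH[OF distinct] Cons.prems(3) South by fastforce
  next
    case East
    then show ?thesis
      using Cons.prems(3) fst_le_pts[of "(i, j')" "(i + 1, j)" w] by auto
  next
    case North
    then show ?thesis
      using Cons.prems(2) by simp
  qed
qed simp

definition strip_walks :: "nat \<Rightarrow> int \<Rightarrow> step list set" where
  "strip_walks k j = {w. distinct (pts (0, j) w) \<and>
                        (\<forall>q \<in> set (pts (0, j) w). 0 \<le> snd q \<and> snd q \<le> int k)}"

lemma walks_eq_strip_walks: "walks k = strip_walks k 0"
  unfolding walks_def strip_walks_def by simp

lemma Nil_in_strip_walks_iff: "[] \<in> strip_walks k j \<longleftrightarrow> 0 \<le> j \<and> j \<le> int k"
  by (simp add: strip_walks_def)

lemma strip_walks_start_height: "w \<in> strip_walks k j \<Longrightarrow> 0 \<le> j \<and> j \<le> int k"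
  unfolding strip_walks_def using start_in_pts[of "(0, j)" w] by fastforce

lemma East_Cons_in_strip_walks_iff: "East # w \<in> strip_walks k j \<longleftrightarrow> w \<in> strip_walks k j"
proof -
  have translate: "pts (1, j) w = map (\<lambda>(p, q). (p + 1, q)) (pts (0, j) w)"
    using pts_translate[of 0 1 j w] by simp
  have "inj (\<lambda>(p, q). (p + 1 :: int, q :: int))"
    by (auto simp: inj_def)
  then have "distinct (pts (1, j) w) \<longleftrightarrow> distinct (pts (0, j) w)"
    unfolding translate by (simp add: distinct_map inj_on_subset[of _ UNIV])
  moreover have "(\<forall>q \<in> set (pts (1, j) w). 0 \<le> snd q \<and> snd q \<le> int k) \<longleftrightarrow>
                 (\<forall>q \<in> set (pts (0, j) w). 0 \<le> snd q \<and> snd q \<le> int k)"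
    unfolding translate by (simp add: split_def)
  moreover have "(0, j) \<notin> set (pts (1, j) w)"
    using fst_le_pts[of "(0, j)" "(1, j)" w] by auto
  ultimately show ?thesis
    unfolding strip_walks_def using start_in_pts[of "(0, j)" w] by auto
qed

lemma North_Cons_in_strip_walks_iff:
  assumes "0 \<le> j"
  shows "North # w \<in> strip_walks k j \<longleftrightarrow> w \<in> strip_walks k (j + 1) \<and> (\<forall>w'. w \<noteq> South # w')"
proof
  assume w: "North # w \<in> strip_walks k j"
  then have "(0, j) \<notin> set (pts (0, j + 1) w)"
    by (simp add: strip_walks_def)
  then have "\<forall>w'. w \<noteq> South # w'"
    by (auto simp: start_in_pts)
  with w show "w \<in> strip_walks k (j + 1) \<and> (\<forall>w'. w \<noteq> South # w')"
    by (simp add: strip_walks_def)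
next
  assume w: "w \<in> strip_walks k (j + 1) \<and> (\<forall>w'. w \<noteq> South # w')"
  then have "(0, j) \<notin> set (pts (0, j + 1) w)"
    using distinct_pts_column_ge[of 0 "j + 1" w j] by (auto simp: strip_walks_def)
  with w assms show "North # w \<in> strip_walks k j"
    using strip_walks_start_height[of w k "j + 1"] by (simp add: strip_walks_def)
qed

lemma South_Cons_in_strip_walks_iff:
  assumes "j \<le> int k"
  shows "South # w \<in> strip_walks k j \<longleftrightarrow> w \<in> strip_walks k (j - 1) \<and> (\<forall>w'. w \<noteq> North # w')"
proof
  assume w: "South # w \<in> strip_walks k j"
  then have "(0, j) \<notin> set (pts (0, j - 1) w)"
    by (simp add: strip_walks_def)
  then have "\<forall>w'. w \<noteq> North # w'"
    by (auto simp: start_in_pts)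
  with w show "w \<in> strip_walks k (j - 1) \<and> (\<forall>w'. w \<noteq> North # w')"
    by (simp add: strip_walks_def)
next
  assume w: "w \<in> strip_walks k (j - 1) \<and> (\<forall>w'. w \<noteq> North # w')"
  then have "(0, j) \<notin> set (pts (0, j - 1) w)"
    using distinct_pts_column_le[of 0 "j - 1" w j] by (auto simp: strip_walks_def)
  with w assms show "South # w \<in> strip_walks k j"
    using strip_walks_start_height[of w k "j - 1"] by (simp add: strip_walks_def)
qed

section \<open>Weights and summability\<close>

definition horiz_weight :: "real \<Rightarrow> real \<Rightarrow> nat \<Rightarrow> int \<Rightarrow> real" where
  "horiz_weight x a k j = (if boundary k j then a else x)"

definition vert_weight :: "real \<Rightarrow> real \<Rightarrow> nat \<Rightarrow> int \<Rightarrow> real" where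
  "vert_weight y b k j = (if boundary k j then b else y)"

fun walk_weight :: "real \<Rightarrow> real \<Rightarrow> real \<Rightarrow> real \<Rightarrow> nat \<Rightarrow> int \<Rightarrow> step list \<Rightarrow> real" where
  "walk_weight x y a b k j [] = 1"
| "walk_weight x y a b k j (East # w) = horiz_weight x a k j * walk_weight x y a b k j w"
| "walk_weight x y a b k j (North # w) = vert_weight y b k (j + 1) * walk_weight x y a b k (j + 1) w"
| "walk_weight x y a b k j (South # w) = vert_weight y b k (j - 1) * walk_weight x y a b k (j - 1) w"

lemma monomial_eq_walk_weight_from:
  "x ^ length (filter (\<lambda>(s, p). s = East \<and> \<not> boundary k (snd p)) (zip w (pts p w)))
   * y ^ length (filter (\<lambda>(s, p). s \<noteq> East \<and> \<not> boundary k (snd (move s p))) (zip w (pts p w)))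
   * a ^ length (filter (\<lambda>(s, p). s = East \<and> boundary k (snd p)) (zip w (pts p w)))
   * b ^ length (filter (\<lambda>(s, p). s \<noteq> East \<and> boundary k (snd (move s p))) (zip w (pts p w)))
   = walk_weight x y a b k (snd p) w"
proof (induction w arbitrary: p)
  case (Cons s w)
  obtain i j where p: "p = (i, j)"
    by force
  show ?case
    using Cons.IH[of "move s p"]
    by (cases s) (simp_all add: p horiz_weight_def vert_weight_def mult_ac)
qed simp

lemma monomial_eq_walk_weight:
  "x ^ hstat k w * y ^ vstat k w * a ^ hcstat k w * b ^ vcstat k w = walk_weight x y a b k 0 w"
  using monomial_eq_walk_weight_from[of x k w "(0, 0)"]
  by (simp add: hstat_def vstat_def hcstat_def vcstat_def steps_at_def)

lemma abs_walk_weight_le: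
  assumes "\<bar>x\<bar> \<le> e" "\<bar>y\<bar> \<le> e" "\<bar>a\<bar> \<le> e" "\<bar>b\<bar> \<le> e"
  shows "\<bar>walk_weight x y a b k j w\<bar> \<le> e ^ length w"
proof (induction w arbitrary: j)
  case (Cons s w)
  have "0 \<le> e"
    using assms by linarith
  then have "\<bar>c * r\<bar> \<le> e * e ^ length w" if "\<bar>c\<bar> \<le> e" "\<bar>r\<bar> \<le> e ^ length w" for c r
    using that by (simp add: abs_mult mult_mono)
  then show ?case
    using Cons.IH assms by (cases s) (simp_all add: horiz_weight_def vert_weight_def)
qed simp

lemma UNIV_step: "(UNIV :: step set) = {North, East, South}"
  using step.exhaust by auto

lemma finite_UNIV_step: "finite (UNIV :: step set)"
  by (simp add: UNIV_step)

lemma card_step_lists: "card {w :: step list. length w = n} = 3 ^ n"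
proof -
  have "card (UNIV :: step set) = 3"
    by (simp add: UNIV_step)
  then show ?thesis
    using card_lists_length_eq[OF finite_UNIV_step, of n] by simp
qed

lemma finite_step_lists: "finite {w :: step list. length w \<le> n}"
  using finite_lists_length_le[OF finite_UNIV_step, of n] by simp

lemma sum_power_length_le:
  assumes "0 \<le> e" "3 * e < (1::real)"
  shows "(\<Sum>w :: step list | length w \<le> n. e ^ length w) \<le> 1 / (1 - 3 * e)"
proof -
  have lengths: "{w :: step list. length w \<le> n} = (\<Union>m\<le>n. {w. length w = m})"
    by auto
  have "(\<Sum>w :: step list | length w \<le> n. e ^ length w) = (\<Sum>m\<le>n. \<Sum>w :: step list | length w = m. e ^ length w)"
    unfolding lengths
    by (rule sum.UNION_disjoint) (auto intro: finite_subset[OF _ finite_step_lists])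
  also have "\<dots> = (\<Sum>m<Suc n. (3 * e) ^ m)"
    by (simp add: card_step_lists power_mult_distrib lessThan_Suc_atMost)
  also have "\<dots> = (1 - (3 * e) ^ Suc n) / (1 - 3 * e)"
    by (subst sum_gp_strict) (use assms in simp)
  also have "\<dots> \<le> 1 / (1 - 3 * e)"
    using assms by (simp add: divide_right_mono)
  finally show ?thesis .
qed

lemma walk_weight_summable_on:
  assumes "\<bar>x\<bar> \<le> e" "\<bar>y\<bar> \<le> e" "\<bar>a\<bar> \<le> e" "\<bar>b\<bar> \<le> e" "3 * e < 1"
  shows "walk_weight x y a b k j summable_on A"
proof -
  have "0 \<le> e"
    using assms by linarith
  have "(\<Sum>w\<in>W. norm (walk_weight x y a b k j w)) \<le> 1 / (1 - 3 * e)" if "finite W" for W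
  proof -
    define n where "n = Max (length ` W)"
    have "W \<subseteq> {w. length w \<le> n}"
      using that by (auto simp: n_def)
    have "(\<Sum>w\<in>W. norm (walk_weight x y a b k j w)) \<le> (\<Sum>w\<in>W. e ^ length w)"
      using abs_walk_weight_le[OF assms(1-4)] by (intro sum_mono) simp
    also have "\<dots> \<le> (\<Sum>w :: step list | length w \<le> n. e ^ length w)"
      using \<open>W \<subseteq> {w. length w \<le> n}\<close> \<open>0 \<le> e\<close> finite_step_lists by (intro sum_mono2) auto
    also have "\<dots> \<le> 1 / (1 - 3 * e)"
      using sum_power_length_le \<open>0 \<le> e\<close> assms(5) .
    finally show ?thesis .
  qed
  then have "Infinite_Sum.abs_summable_on (walk_weight x y a b k j) UNIV"
    unfolding abs_summable_iff_bdd_above by (intro bdd_aboveI[where M = "1 / (1 - 3 * e)"]) auto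
  then show ?thesis
    by (rule summable_on_subset_banach[OF abs_summable_summable]) simp
qed

section \<open>Solving the first-step system\<close>

definition strip_gf_closed_form :: "real \<Rightarrow> real \<Rightarrow> real \<Rightarrow> nat \<Rightarrow> real \<Rightarrow> real" where
  "strip_gf_closed_form y a b k S =
     1 / (Ppol y a b (1 / S) * S ^ k + Ppol y a b S) *
     (Qpol y b (1 / S) * S ^ k + Qpol y b S + (1 - y^2) * (S ^ k - S) / (S - 1))"

text \<open>The characteristic roots are \<open>S\<close> and \<open>1/S\<close>; the constant \<open>c\<close> is a particular solution.\<close>

lemma inhomogeneous_recurrence_closed_form:
  fixes g :: "nat \<Rightarrow> real"
  assumes "y \<noteq> 0" "S \<noteq> 0" "S^2 \<noteq> 1"
    and c: "c * (2 * y - y * (S + 1 / S)) = d"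
    and rec: "\<And>j. j + 2 \<le> k \<Longrightarrow> y * g j - y * (S + 1 / S) * g (j + 1) + y * g (j + 2) = d"
  shows "\<exists>A B. \<forall>j\<le>k. g j = c + A * S^j + B / S^j"
proof -
  define A where "A = (S * (g 1 - c) - (g 0 - c)) / (S^2 - 1)"
  define B where "B = g 0 - c - A"
  define f where "f j = c + A * S^j + B / S^j" for j
  have f0: "f 0 = g 0"
    by (simp add: f_def B_def)
  have "A * (S^2 - 1) = S * (g 1 - c) - (g 0 - c)"
    using assms(3) by (simp add: A_def)
  then have f1: "f 1 = g 1"
    using assms(2) by (simp add: f_def B_def field_simps power2_eq_square)
  have f_rec: "y * f j - y * (S + 1 / S) * f (j + 1) + y * f (j + 2) = d" for j
  proof -
    have "S^(j + 1) = S^j * S" "S^(j + 2) = S^j * S * S"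
      by (simp_all add: power_add power2_eq_square)
    then have "y * f j - y * (S + 1 / S) * f (j + 1) + y * f (j + 2) = c * (2 * y - y * (S + 1 / S))"
      using assms(2) by (simp add: f_def field_simps)
    then show ?thesis
      using c by simp
  qed
  have consecutive: "j + 1 \<le> k \<longrightarrow> g j = f j \<and> g (j + 1) = f (j + 1)" for j
  proof (induction j)
    case (Suc j)
    show ?case
    proof
      assume "Suc j + 1 \<le> k"
      with Suc have "g j = f j" "g (j + 1) = f (j + 1)"
        by simp_all
      then have "y * f j - y * (S + 1 / S) * f (j + 1) + y * g (j + 2) = d"
        using rec[of j] \<open>Suc j + 1 \<le> k\<close> by simp
      then have "y * g (j + 2) = y * f (j + 2)"
        using f_rec[of j] by linarith
      then show "g (Suc j) = f (Suc j) \<and> g (Suc j + 1) = f (Suc j + 1)"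
        using \<open>g (j + 1) = f (j + 1)\<close> assms(1) by simp
    qed
  qed (simp add: f0 flip: f1 One_nat_def)
  have "g j = f j" if "j \<le> k" for j
    using that f0 consecutive[of "j - 1"] by (cases j) auto
  then show ?thesis
    unfolding f_def by blast
qed

lemma mirror_linear_system_solution:
  fixes p q r u v T :: real
  assumes "p * u + q * v = r" "q * T * T * u + p * v = r * T" "p - q * T \<noteq> 0"
  shows "u * (p + q * T) = r" "v * (p + q * T) = r * T"
proof -
  have "u * (p - q * T) * (p + q * T) = r * (p - q * T)"
    using arg_cong2[OF assms(1,2), of "\<lambda>s t. s * p - t * q"] by (simp add: algebra_simps)
  then show "u * (p + q * T) = r"
    using assms(3) by simp
  have "v * (p - q * T) * (p + q * T) = r * T * (p - q * T)"
    using arg_cong2[OF assms(1,2), of "\<lambda>s t. t * p - s * (q * T * T)"] by (simp add: algebra_simps)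
  then show "v * (p + q * T) = r * T"
    using assms(3) by simp
qed

text \<open>The two boundary conditions at each end of the strip (with \<open>T = S\<^sup>k\<close>) determine the
  coefficients \<open>A\<close>, \<open>B\<close> of the general solution \<open>c + A S\<^sup>j + B S\<^sup>-\<^sup>j\<close>; eliminating the unknown
  value \<open>X\<^sub>k\<close> at the top leaves \<open>X\<^sub>0\<close>.\<close>

lemma boundary_value_solution:
  fixes S T y a b c A B X0 Xk :: real
  defines "a1 \<equiv> y + a * b - a * y" and "a2 \<equiv> 1 - a + a * b * y"
  defines "p \<equiv> a2 - a1 * S" and "q \<equiv> a2 - a1 / S"
  defines "r \<equiv> a1 * (y * c + 1 - b * y) + a2 * (b - y - y * c)"
  assumes e1: "y * (c + A + B) = a1 * X0 + (b - y)"
    and e2: "y * (c + A * S + B / S) = a2 * X0 - (1 - b * y)"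
    and e3: "y * (c + A * T + B / T) = a1 * Xk + (b - y)"
    and e4: "y * (c + A * T / S + B * S / T) = a2 * Xk - (1 - b * y)"
    and nz: "S \<noteq> 0" "T \<noteq> 0" "a2 \<noteq> 0" "p - q * T \<noteq> 0"
  shows "a2 * X0 * (p + q * T) = (y * c + 1 - b * y) * (p + q * T) + r * (S + T / S)"
proof -
  define u where "u = y * A"
  define v where "v = y * B"
  have bottom: "p * u + q * v = r"
  proof -
    have "a2 * (y * (c + A + B)) - a1 * (y * (c + A * S + B / S))
        = a2 * (a1 * X0 + (b - y)) - a1 * (a2 * X0 - (1 - b * y))"
      using e1 e2 by simp
    then show ?thesis
      unfolding p_def q_def r_def u_def v_def using nz
      by (simp add: field_simps; simp add: algebra_simps)
  qed
  have top: "q * T * T * u + p * v = r * T"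
  proof -
    have "a2 * (y * (c + A * T + B / T)) - a1 * (y * (c + A * T / S + B * S / T))
        = a2 * (a1 * Xk + (b - y)) - a1 * (a2 * Xk - (1 - b * y))"
      using e3 e4 by simp
    then have "a2 * (y * c + u * T + v / T) - a1 * (y * c + u * T / S + v * S / T)
        - (a2 * (b - y) + a1 * (1 - b * y)) = 0"
      unfolding u_def v_def by (simp add: algebra_simps)
    moreover have "q * T * T * u + p * v - r * T = T * (a2 * (y * c + u * T + v / T)
        - a1 * (y * c + u * T / S + v * S / T) - (a2 * (b - y) + a1 * (1 - b * y)))"
      unfolding p_def q_def r_def using nz by (simp add: field_simps)
    ultimately show ?thesis
      by simp
  qed
  obtain u: "u * (p + q * T) = r" and v: "v * (p + q * T) = r * T"
    using mirror_linear_system_solution[OF bottom top nz(4)] by blast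
  have X0: "a2 * X0 = y * c + u * S + v / S + (1 - b * y)"
    using e2 nz unfolding u_def v_def by (simp add: field_simps)
  have "a2 * X0 * (p + q * T) = (y * c + (1 - b * y)) * (p + q * T) + (u * (p + q * T)) * S
      + (v * (p + q * T)) / S"
    unfolding X0 using nz by (simp add: field_simps)
  also have "\<dots> = (y * c + 1 - b * y) * (p + q * T) + r * (S + T / S)"
    unfolding u v using nz by (simp add: field_simps)
  finally show ?thesis .
qed

lemma closed_form_identity:
  fixes S T y a b :: real
  assumes "S \<noteq> 0" "y \<noteq> 0" "S \<noteq> 1" and c: "c = S * (1 - y^2) / (y * (S - 1)^2)"
  shows "(1 - a + a * b * y) * (Qpol y b (1 / S) * T + Qpol y b S + (1 - y^2) * (T - S) / (S - 1))
    = (y * c + 1 - b * y) * (Ppol y a b S + Ppol y a b (1 / S) * T)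
      + ((y + a * b - a * y) * (y * c + 1 - b * y) + (1 - a + a * b * y) * (b - y - y * c)) * (S + T / S)"
proof -
  have "S - 1 \<noteq> 0"
    using assms by simp
  then show ?thesis
    using assms(1-3) unfolding c Ppol_def Qpol_def by (simp add: field_simps) algebra
qed

lemma boundary_reflect: "boundary k (int k - j) \<longleftrightarrow> boundary k j"
  by (auto simp: boundary_def)

lemma horiz_weight_reflect: "horiz_weight x a k (int k - j) = horiz_weight x a k j"
  by (simp add: horiz_weight_def boundary_reflect)

lemma vert_weight_reflect: "vert_weight y b k (int k - j) = vert_weight y b k j"
  by (simp add: vert_weight_def boundary_reflect)

lemma vert_weight_0: "vert_weight y b k 0 = b"
  by (simp add: vert_weight_def boundary_def)

text \<open>The first-step equations, indexed by the starting height: \<open>F\<close> stands for all walks,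
  \<open>P\<close> for the walks whose first step is not South and \<open>M\<close> for those whose first step is not
  North. Terms with a starting height outside \<open>[0, k]\<close> vanish.\<close>

locale strip_system =
  fixes k :: nat and x y a b :: real and F P M :: "int \<Rightarrow> real"
  assumes F_eq: "0 \<le> j \<Longrightarrow> j \<le> int k \<Longrightarrow> F j = 1 + horiz_weight x a k j * F j
             + vert_weight y b k (j + 1) * P (j + 1) + vert_weight y b k (j - 1) * M (j - 1)"
    and P_eq: "0 \<le> j \<Longrightarrow> j \<le> int k \<Longrightarrow>
             P j = 1 + horiz_weight x a k j * F j + vert_weight y b k (j + 1) * P (j + 1)"
    and M_eq: "0 \<le> j \<Longrightarrow> j \<le> int k \<Longrightarrow>
             M j = 1 + horiz_weight x a k j * F j + vert_weight y b k (j - 1) * M (j - 1)"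
    and P_top: "P (int k + 1) = 0"
    and M_bottom: "M (-1) = 0"
begin

lemma reflected: "strip_system k x y a b (\<lambda>j. F (int k - j)) (\<lambda>j. M (int k - j)) (\<lambda>j. P (int k - j))"
proof
  fix j :: int
  assume j: "0 \<le> j" "j \<le> int k"
  have shift: "int k - (j + 1) = int k - j - 1" "int k - (j - 1) = int k - j + 1"
    by simp_all
  show "F (int k - j) = 1 + horiz_weight x a k j * F (int k - j)
      + vert_weight y b k (j + 1) * M (int k - (j + 1)) + vert_weight y b k (j - 1) * P (int k - (j - 1))"
    using F_eq[of "int k - j"] j vert_weight_reflect[of y b k "j + 1"] vert_weight_reflect[of y b k "j - 1"]
    by (simp add: horiz_weight_reflect shift)
  show "M (int k - j) = 1 + horiz_weight x a k j * F (int k - j)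
      + vert_weight y b k (j + 1) * M (int k - (j + 1))"
    using M_eq[of "int k - j"] j vert_weight_reflect[of y b k "j + 1"]
    by (simp add: horiz_weight_reflect shift)
  show "P (int k - j) = 1 + horiz_weight x a k j * F (int k - j)
      + vert_weight y b k (j - 1) * P (int k - (j - 1))"
    using P_eq[of "int k - j"] j vert_weight_reflect[of y b k "j - 1"]
    by (simp add: horiz_weight_reflect shift)
qed (simp_all add: P_top M_bottom)

lemma F_eq_M_plus:
  assumes "0 \<le> j" "j \<le> int k"
  shows "F j = M j + vert_weight y b k (j + 1) * P (j + 1)"
  using F_eq[OF assms] M_eq[OF assms] by simp

lemma P_plus_M:
  assumes "0 \<le> j" "j \<le> int k"
  shows "P j + M j = F j + 1 + horiz_weight x a k j * F j"
  using F_eq[OF assms] P_eq[OF assms] M_eq[OF assms] by linarith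

lemma M_0: "M 0 = 1 + a * F 0"
  using M_eq[of 0] M_bottom by (simp add: horiz_weight_def boundary_def)

text \<open>Replacing \<open>F\<close> by \<open>G\<close> at the two boundary heights absorbs the boundary weights, so that
  \<open>G\<close> satisfies one linear recurrence with constant coefficients on the whole strip.\<close>

definition G :: "int \<Rightarrow> real" where
  "G j = F j + (if boundary k j then (b - y) * (1 + a * F j) / y else 0)"

lemma y_G_below:
  assumes "y \<noteq> 0" "0 \<le> i" "i < int k"
  shows "y * G i = y * vert_weight y b k (i + 1) * P (i + 1) + vert_weight y b k i * M i"
proof (cases "i = 0")
  case True
  have "y * G 0 = y * F 0 + (b - y) * M 0"
    using assms(1) by (simp add: G_def boundary_def M_0 field_simps)
  then show ?thesis
    using True F_eq_M_plus[of 0] assms by (simp add: vert_weight_0 algebra_simps)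
next
  case False
  then have "G i = F i" "vert_weight y b k i = y"
    using assms by (simp_all add: G_def vert_weight_def boundary_def)
  then show ?thesis
    using assms F_eq_M_plus[of i] by (simp add: algebra_simps)
qed

lemma G_reflect: "strip_system.G k y a b (\<lambda>j. F (int k - j)) j = G (int k - j)"
  by (simp add: strip_system.G_def[OF reflected] G_def boundary_reflect)

lemma y_G_above:
  assumes "y \<noteq> 0" "0 < j" "j \<le> int k"
  shows "y * G j = y * vert_weight y b k (j - 1) * M (j - 1) + vert_weight y b k j * P j"
proof -
  interpret reflected: strip_system k x y a b "\<lambda>j. F (int k - j)" "\<lambda>j. M (int k - j)" "\<lambda>j. P (int k - j)"
    by (rule reflected)
  show ?thesis
    using reflected.y_G_below[of "int k - j"] assms vert_weight_reflect[of y b k "j - 1"]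
    by (simp add: G_reflect vert_weight_reflect algebra_simps)
qed

lemma G_recurrence:
  assumes "y \<noteq> 0" "0 < j" "j < int k"
  shows "y * G (j - 1) - (1 - x + y^2 * (1 + x)) * G j + y * G (j + 1) = -(1 - y^2)"
proof -
  have interior: "\<not> boundary k j"
    using assms by (simp add: boundary_def)
  have "y * G (j - 1) + y * G (j + 1)
      = y^2 * (P j + M j) + vert_weight y b k (j + 1) * P (j + 1) + vert_weight y b k (j - 1) * M (j - 1)"
    using y_G_below[of "j - 1"] y_G_above[of "j + 1"] assms interior
    by (simp add: vert_weight_def power2_eq_square algebra_simps)
  also have "\<dots> = (1 - x + y^2 * (1 + x)) * F j - (1 - y^2)"
    using P_plus_M[of j] F_eq[of j] assms interior by (simp add: horiz_weight_def algebra_simps)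
  finally show ?thesis
    using interior by (simp add: G_def)
qed

lemma y_G_0: "y \<noteq> 0 \<Longrightarrow> y * G 0 = (y + a * b - a * y) * F 0 + (b - y)"
  by (simp add: G_def boundary_def field_simps)

lemma y_G_1:
  assumes "y \<noteq> 0" "1 \<le> k"
  shows "y * G 1 = (1 - a + a * b * y) * F 0 - (1 - b * y)"
proof -
  have "y * G 1 = y * b * M 0 + (F 0 - M 0)"
    using y_G_above[of 1] F_eq_M_plus[of 0] assms by (simp add: vert_weight_0)
  then show ?thesis
    using M_0 by (simp add: algebra_simps)
qed

lemma y_G_top:
  assumes "y \<noteq> 0"
  shows "y * G (int k) = (y + a * b - a * y) * F (int k) + (b - y)"
proof -
  interpret reflected: strip_system k x y a b "\<lambda>j. F (int k - j)" "\<lambda>j. M (int k - j)" "\<lambda>j. P (int k - j)"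
    by (rule reflected)
  show ?thesis
    using reflected.y_G_0[OF assms] by (simp add: G_reflect)
qed

lemma y_G_top_1:
  assumes "y \<noteq> 0" "1 \<le> k"
  shows "y * G (int k - 1) = (1 - a + a * b * y) * F (int k) - (1 - b * y)"
proof -
  interpret reflected: strip_system k x y a b "\<lambda>j. F (int k - j)" "\<lambda>j. M (int k - j)" "\<lambda>j. P (int k - j)"
    by (rule reflected)
  show ?thesis
    using reflected.y_G_1[OF assms] by (simp add: G_reflect)
qed

lemma G_closed_form:
  assumes y: "y \<noteq> 0" and S: "S \<noteq> 0" "S^2 \<noteq> 1"
    and root: "1 - x + y^2 * (1 + x) = y * (S + 1 / S)"
  obtains A B where "\<And>n. n \<le> k \<Longrightarrow> G (int n) = S * (1 - y^2) / (y * (S - 1)^2) + A * S^n + B / S^n"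
proof -
  have "2 * y - y * (S + 1 / S) = - (y * (S - 1)^2 / S)"
    using S by (simp add: field_simps power2_eq_square)
  moreover have "S \<noteq> 1"
    using S by auto
  ultimately have "S * (1 - y^2) / (y * (S - 1)^2) * (2 * y - y * (S + 1 / S)) = -(1 - y^2)"
    using S y by simp
  moreover have "y * G (int j) - y * (S + 1 / S) * G (int (j + 1)) + y * G (int (j + 2)) = -(1 - y^2)"
    if "j + 2 \<le> k" for j
    using G_recurrence[OF y, of "int j + 1"] that by (simp add: root[symmetric] add.assoc add.commute)
  ultimately show ?thesis
    using inhomogeneous_recurrence_closed_form[OF y S, of _ _ k "\<lambda>n. G (int n)"] that by blast
qed

lemma F_0_eq_closed_form:
  assumes y: "y \<noteq> 0" and k: "1 \<le> k" and S: "S \<noteq> 0" "S^2 \<noteq> 1"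
    and root: "1 - x + y^2 * (1 + x) = y * (S + 1 / S)"
    and a2: "1 - a + a * b * y \<noteq> 0"
    and P_minus: "Ppol y a b S - Ppol y a b (1 / S) * S^k \<noteq> 0"
    and P_plus: "Ppol y a b S + Ppol y a b (1 / S) * S^k \<noteq> 0"
  shows "F 0 = strip_gf_closed_form y a b k S"
proof -
  define c where "c = S * (1 - y^2) / (y * (S - 1)^2)"
  define T where "T = S^k"
  have "S \<noteq> 1"
    using S by auto
  obtain A B where AB: "\<And>n. n \<le> k \<Longrightarrow> G (int n) = c + A * S^n + B / S^n"
    using G_closed_form[OF y S root] unfolding c_def by blast
  have "T \<noteq> 0"
    using S by (simp add: T_def)
  have "S^(k - 1) = T / S"
    using k S by (simp add: T_def power_diff)
  have e1: "y * (c + A + B) = (y + a * b - a * y) * F 0 + (b - y)"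
    using AB[of 0] y_G_0[OF y] by simp
  have e2: "y * (c + A * S + B / S) = (1 - a + a * b * y) * F 0 - (1 - b * y)"
    using AB[of 1] y_G_1[OF y k] k by simp
  have e3: "y * (c + A * T + B / T) = (y + a * b - a * y) * F (int k) + (b - y)"
    using AB[of k] y_G_top[OF y] by (simp add: T_def)
  have e4: "y * (c + A * T / S + B * S / T) = (1 - a + a * b * y) * F (int k) - (1 - b * y)"
    using AB[of "k - 1"] y_G_top_1[OF y k] k \<open>S^(k - 1) = T / S\<close> by (simp add: of_nat_diff)
  have Ppol_expand: "Ppol y a b s = (1 - a + a * b * y) - (y + a * b - a * y) * s" for s
    by (simp add: Ppol_def algebra_simps)
  have nz: "(1 - a + a * b * y) - (y + a * b - a * y) * S - ((1 - a + a * b * y) - (y + a * b - a * y) / S) * T \<noteq> 0"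
    using P_minus by (simp add: Ppol_expand T_def)
  have "(1 - a + a * b * y) * F 0 * (Ppol y a b S + Ppol y a b (1 / S) * T)
      = (y * c + 1 - b * y) * (Ppol y a b S + Ppol y a b (1 / S) * T)
        + ((y + a * b - a * y) * (y * c + 1 - b * y) + (1 - a + a * b * y) * (b - y - y * c)) * (S + T / S)"
    using boundary_value_solution[OF e1 e2 e3 e4 S(1) \<open>T \<noteq> 0\<close> a2 nz]
    by (simp only: Ppol_expand times_divide_eq_right mult_1_right)
  also have "\<dots> = (1 - a + a * b * y) * (Qpol y b (1 / S) * T + Qpol y b S + (1 - y^2) * (T - S) / (S - 1))"
    by (rule closed_form_identity[OF S(1) y \<open>S \<noteq> 1\<close> c_def, symmetric])
  finally have "F 0 * (Ppol y a b S + Ppol y a b (1 / S) * T)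
      = Qpol y b (1 / S) * T + Qpol y b S + (1 - y^2) * (T - S) / (S - 1)"
    using a2 by (simp add: mult.assoc)
  then show ?thesis
    using a2 P_plus by (simp add: strip_gf_closed_form_def T_def field_simps)
qed

end

section \<open>The generating functions of walks\<close>

lemma infsum_first_step:
  fixes f :: "step list \<Rightarrow> real"
  assumes "f summable_on A"
  shows "infsum f A = (if [] \<in> A then f [] else 0)
           + infsum (\<lambda>w. f (East # w)) {w. East # w \<in> A}
           + infsum (\<lambda>w. f (North # w)) {w. North # w \<in> A}
           + infsum (\<lambda>w. f (South # w)) {w. South # w \<in> A}"
proof -
  define C where "C s = Cons s ` {w. s # w \<in> A}" for s
  have A: "A = (A \<inter> {[]}) \<union> C East \<union> C North \<union> C South"
  proof (intro equalityI subsetI)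
    fix w
    assume "w \<in> A"
    then show "w \<in> (A \<inter> {[]}) \<union> C East \<union> C North \<union> C South"
    proof (cases w)
      case (Cons s w')
      with \<open>w \<in> A\<close> show ?thesis
        by (cases s) (auto simp: C_def)
    qed simp
  qed (auto simp: C_def)
  have summable: "f summable_on B" if "B \<subseteq> A" for B
    using summable_on_subset_banach[OF assms that] .
  have tail: "infsum f (C s) = infsum (\<lambda>w. f (s # w)) {w. s # w \<in> A}" for s
    unfolding C_def by (subst infsum_reindex) (simp_all add: o_def)
  have "infsum f A = infsum f ((A \<inter> {[]}) \<union> C East \<union> C North \<union> C South)"
    using A by (rule arg_cong)
  also have "\<dots> = infsum f ((A \<inter> {[]}) \<union> C East \<union> C North) + infsum f (C South)"
    by (rule infsum_Un_disjoint) (auto intro!: summable simp: C_def)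
  also have "infsum f ((A \<inter> {[]}) \<union> C East \<union> C North) = infsum f ((A \<inter> {[]}) \<union> C East) + infsum f (C North)"
    by (rule infsum_Un_disjoint) (auto intro!: summable simp: C_def)
  also have "infsum f ((A \<inter> {[]}) \<union> C East) = infsum f (A \<inter> {[]}) + infsum f (C East)"
    by (rule infsum_Un_disjoint) (auto intro!: summable simp: C_def)
  also have "infsum f (A \<inter> {[]}) = (if [] \<in> A then f [] else 0)"
    by simp
  finally show ?thesis
    by (simp add: tail)
qed

definition strip_gf :: "real \<Rightarrow> real \<Rightarrow> real \<Rightarrow> real \<Rightarrow> nat \<Rightarrow> int \<Rightarrow> real" where
  "strip_gf x y a b k j = infsum (walk_weight x y a b k j) (strip_walks k j)"

definition strip_gf_not_first :: "real \<Rightarrow> real \<Rightarrow> real \<Rightarrow> real \<Rightarrow> nat \<Rightarrow> step \<Rightarrow> int \<Rightarrow> real" where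
  "strip_gf_not_first x y a b k s j =
     infsum (walk_weight x y a b k j) {w \<in> strip_walks k j. \<forall>w'. w \<noteq> s # w'}"

lemma strip_system_strip_gf:
  assumes summable: "\<And>j A. walk_weight x y a b k j summable_on A"
  shows "strip_system k x y a b (strip_gf x y a b k)
           (strip_gf_not_first x y a b k South) (strip_gf_not_first x y a b k North)"
proof
  let ?W = "walk_weight x y a b k"
  let ?F = "strip_gf x y a b k" and ?P = "strip_gf_not_first x y a b k South"
    and ?M = "strip_gf_not_first x y a b k North"
  fix j :: int
  assume j: "0 \<le> j" "j \<le> int k"
  have East: "infsum (\<lambda>w. horiz_weight x a k j * ?W j w) {w. East # w \<in> strip_walks k j} = horiz_weight x a k j * ?F j"
    by (simp add: East_Cons_in_strip_walks_iff infsum_cmult_right' strip_gf_def)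
  have North: "infsum (\<lambda>w. vert_weight y b k (j + 1) * ?W (j + 1) w) {w. North # w \<in> strip_walks k j}
      = vert_weight y b k (j + 1) * ?P (j + 1)"
    using j by (simp add: North_Cons_in_strip_walks_iff infsum_cmult_right' strip_gf_not_first_def)
  have South: "infsum (\<lambda>w. vert_weight y b k (j - 1) * ?W (j - 1) w) {w. South # w \<in> strip_walks k j}
      = vert_weight y b k (j - 1) * ?M (j - 1)"
    using j by (simp add: South_Cons_in_strip_walks_iff infsum_cmult_right' strip_gf_not_first_def)
  have Nil: "[] \<in> strip_walks k j"
    using j by (simp add: Nil_in_strip_walks_iff)
  show "?F j = 1 + horiz_weight x a k j * ?F j
      + vert_weight y b k (j + 1) * ?P (j + 1) + vert_weight y b k (j - 1) * ?M (j - 1)"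
    using infsum_first_step[OF summable, of j "strip_walks k j"] Nil
    by (simp add: East North South strip_gf_def)
  show "?P j = 1 + horiz_weight x a k j * ?F j + vert_weight y b k (j + 1) * ?P (j + 1)"
    using infsum_first_step[OF summable, of j "{w \<in> strip_walks k j. \<forall>w'. w \<noteq> South # w'}"] Nil
    by (simp add: East North strip_gf_not_first_def)
  show "?M j = 1 + horiz_weight x a k j * ?F j + vert_weight y b k (j - 1) * ?M (j - 1)"
    using infsum_first_step[OF summable, of j "{w \<in> strip_walks k j. \<forall>w'. w \<noteq> North # w'}"] Nil
    by (simp add: East South strip_gf_not_first_def)
next
  have "strip_walks k (int k + 1) = {}" "strip_walks k (-1) = {}"
    using strip_walks_start_height by force+
  then show "strip_gf_not_first x y a b k South (int k + 1) = 0"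
    "strip_gf_not_first x y a b k North (-1) = 0"
    by (simp_all add: strip_gf_not_first_def)
qed

section \<open>The recurrence for \<open>N\<^sub>k\<close> and \<open>G\<^sub>k\<close>\<close>

text \<open>The roots of \<open>t\<^sup>2 - y (S + 1/S) t + y\<^sup>2\<close> are \<open>y S\<close> and \<open>y / S\<close>.\<close>

lemma homogeneous_recurrence_closed_form:
  fixes L :: "nat \<Rightarrow> real"
  assumes rec: "\<And>n. L (n + 2) = y * (S + 1 / S) * L (n + 1) - y^2 * L n"
    and "S \<noteq> 0"
    and L0: "L 0 = \<alpha> + \<beta>" and L1: "L 1 * S = y * (\<alpha> * S^2 + \<beta>)"
  shows "L n * S^n = y^n * (\<alpha> * S^(2 * n) + \<beta>)"
proof (induction n rule: less_induct)
  case (less n)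
  consider "n = 0" | "n = 1" | m where "n = m + 2"
    by (metis One_nat_def add_2_eq_Suc' not0_implies_Suc)
  then show ?case
  proof cases
    case 3
    have "L n * S^n = y * (S + 1 / S) * S * (L (m + 1) * S^(m + 1)) - y^2 * S^2 * (L m * S^m)"
      unfolding 3 rec using \<open>S \<noteq> 0\<close> by (simp add: field_simps power_add power2_eq_square)
    also have "\<dots> = y * (S + 1 / S) * S * (y^(m + 1) * (\<alpha> * S^(2 * (m + 1)) + \<beta>))
        - y^2 * S^2 * (y^m * (\<alpha> * S^(2 * m) + \<beta>))"
      using less[of "m + 1"] less[of m] 3 by simp
    also have "\<dots> = y^n * (\<alpha> * S^(2 * n) + \<beta>)"
      unfolding 3 using \<open>S \<noteq> 0\<close> by (simp add: field_simps power_add power2_eq_square power_mult)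
    finally show ?thesis .
  qed (use L0 L1 in simp_all)
qed

lemma div_eq_of_proportional:
  fixes N G D Q \<kappa> \<nu> :: real
  assumes "N * \<kappa> = \<nu> * Q" "G * \<kappa> = \<nu> * D" "\<kappa> \<noteq> 0" "\<nu> \<noteq> 0"
  shows "N / G = 1 / D * Q"
proof -
  have N: "N = \<nu> * Q / \<kappa>" and G: "G = \<nu> * D / \<kappa>"
    using assms by (simp_all add: eq_divide_eq)
  show ?thesis
    unfolding N G using assms by (cases "D = 0") (simp_all add: field_simps)
qed

lemma Gk_rec: "Gk x y a b (n + 4) = (1 - x + y^2 * (1 + x)) * Gk x y a b (n + 2) - y^2 * Gk x y a b n"
  by (simp add: numeral_eq_Suc)

lemma NN_rec: "NN x y a b (n + 4) = (1 - x + y^2 * (1 + x)) * NN x y a b (n + 2) - y^2 * NN x y a b n"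
  by (simp add: numeral_eq_Suc)

text \<open>Here \<open>root\<close> is the equation \<open>S + 1/S = (1 + x) y + (1 - x)/y\<close> solved for \<open>x\<close>.\<close>

context
  fixes x y a b S :: real
  assumes S0: "S \<noteq> 0" and S1: "S \<noteq> 1" and y0: "y \<noteq> 0" and y1: "y^2 \<noteq> 1"
    and root: "x * (S * (y^2 - 1)) = (S * y - 1) * (S - y)"
begin

lemma recurrence_coefficient: "1 - x + y^2 * (1 + x) = y * (S + 1 / S)"
  using root S0 y0 y1 by (simp add: field_simps) (simp add: algebra_simps power2_eq_square)

lemma Gk_0: "Gk x y a b 0 * (1 - y^2) = Ppol y a b (1 / S) + Ppol y a b S"
  unfolding Ppol_def using S0 y0 by (simp add: field_simps) (use root in algebra)

lemma Gk_2: "Gk x y a b 2 * (1 - y^2) * S = y * (Ppol y a b (1 / S) * S^2 + Ppol y a b S)"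
  unfolding Ppol_def using S0 y0 by (simp add: numeral_2_eq_2 field_simps) (use root in algebra)

lemma Gk_1: "Gk x y a b 1 * (1 + S) * (1 - y) = S * Ppol y a b (1 / S) + Ppol y a b S"
  unfolding Ppol_def using S0 y0 by (simp add: field_simps)

lemma Gk_3: "Gk x y a b 3 * (1 + S) * (1 - y) * S = y * (S * Ppol y a b (1 / S) * S^2 + Ppol y a b S)"
  unfolding Ppol_def using S0 y0 by (simp add: numeral_3_eq_3 field_simps) (use root in algebra)

lemma NN_1: "NN x y a b 1 * (1 - y^2) * (S - 1)
    = (Qpol y b (1 / S) * (S - 1) + (1 - y^2)) + (Qpol y b S * (S - 1) - (1 - y^2) * S)"
  unfolding Qpol_def using S0 y0 by (simp add: field_simps) (use root in algebra)

lemma NN_3: "NN x y a b 3 * (1 - y^2) * (S - 1) * S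
    = y * ((Qpol y b (1 / S) * (S - 1) + (1 - y^2)) * S^2 + (Qpol y b S * (S - 1) - (1 - y^2) * S))"
  unfolding Qpol_def using S0 y0 by (simp add: numeral_3_eq_3 field_simps) (use root in algebra)

lemma NN_0: "NN x y a b 0 * (1 + S) * (1 - y) * y * (S - 1)
    = (Qpol y b (1 / S) * (S - 1) + (1 - y^2)) + (S * Qpol y b S * (S - 1) - (1 - y^2) * S^2)"
  unfolding Qpol_def using S0 y0 by (simp add: field_simps) (use root in algebra)

lemma NN_2: "NN x y a b 2 * (1 + S) * (1 - y) * y * (S - 1) * S
    = y * ((Qpol y b (1 / S) * (S - 1) + (1 - y^2)) * S^2 + (S * Qpol y b S * (S - 1) - (1 - y^2) * S^2))"
  unfolding Qpol_def using S0 y0 by (simp add: numeral_2_eq_2 field_simps)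

lemma Gk_rec_shifted:
  "Gk x y a b (2 * (n + 2) + r) * c
     = y * (S + 1 / S) * (Gk x y a b (2 * (n + 1) + r) * c) - y^2 * (Gk x y a b (2 * n + r) * c)"
  using Gk_rec[of x y a b "2 * n + r"] recurrence_coefficient by (simp add: algebra_simps)

lemma NN_rec_shifted:
  "NN x y a b (2 * (n + 2) + r) * c
     = y * (S + 1 / S) * (NN x y a b (2 * (n + 1) + r) * c) - y^2 * (NN x y a b (2 * n + r) * c)"
  using NN_rec[of x y a b "2 * n + r"] recurrence_coefficient by (simp add: algebra_simps)

lemma Nk_div_Gk_even:
  assumes "k = 2 * n"
  shows "Nk x y a b k / Gk x y a b k = strip_gf_closed_form y a b k S"
proof -
  define Q where "Q = Qpol y b (1 / S) * S^k + Qpol y b S + (1 - y^2) * (S^k - S) / (S - 1)"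
  have G: "(Gk x y a b (2 * n + 0) * (1 - y^2)) * S^n
      = y^n * (Ppol y a b (1 / S) * S^(2 * n) + Ppol y a b S)"
    by (rule homogeneous_recurrence_closed_form[OF Gk_rec_shifted S0])
       (use Gk_0 Gk_2 in \<open>simp_all add: numeral_2_eq_2\<close>)
  have "(NN x y a b (2 * n + 1) * ((1 - y^2) * (S - 1))) * S^n
      = y^n * ((Qpol y b (1 / S) * (S - 1) + (1 - y^2)) * S^(2 * n) + (Qpol y b S * (S - 1) - (1 - y^2) * S))"
    by (rule homogeneous_recurrence_closed_form[OF NN_rec_shifted S0])
       (use NN_1 NN_3 in \<open>simp_all add: numeral_3_eq_3 mult.assoc del: NN.simps\<close>)
  also have "\<dots> = y^n * ((S - 1) * Q)"
    unfolding Q_def assms using S1 by (simp add: field_simps)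
  finally have N: "(NN x y a b (2 * n + 1) * ((1 - y^2) * (S - 1))) * S^n = y^n * ((S - 1) * Q)" .
  have "1 - y^2 \<noteq> 0" "S - 1 \<noteq> 0"
    using y1 S1 by simp_all
  moreover note arg_cong[OF G, of "\<lambda>t. t * (S - 1)"]
  ultimately show ?thesis
    unfolding strip_gf_closed_form_def Q_def[symmetric]
    by (intro div_eq_of_proportional[where \<kappa> = "(1 - y^2) * (S - 1) * S^n" and \<nu> = "y^n * (S - 1)"])
       (use N S0 y0 in \<open>simp_all add: Nk_def assms mult_ac\<close>)
qed

lemma Nk_div_Gk_odd:
  assumes "k = 2 * n + 1" and "S \<noteq> -1"
  shows "Nk x y a b k / Gk x y a b k = strip_gf_closed_form y a b k S"
proof -
  define Q where "Q = Qpol y b (1 / S) * S^k + Qpol y b S + (1 - y^2) * (S^k - S) / (S - 1)"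
  have G: "(Gk x y a b (2 * n + 1) * ((1 + S) * (1 - y))) * S^n
      = y^n * ((S * Ppol y a b (1 / S)) * S^(2 * n) + Ppol y a b S)"
    by (rule homogeneous_recurrence_closed_form[OF Gk_rec_shifted S0])
       (use Gk_1 Gk_3 in \<open>simp_all add: numeral_3_eq_3 mult.assoc\<close>)
  have "(NN x y a b (2 * n + 2) * ((1 + S) * (1 - y) * (S - 1))) * S^n * (y * S)
      = (NN x y a b (2 * (n + 1) + 0) * ((1 + S) * (1 - y) * y * (S - 1))) * S^(n + 1)"
    by (simp add: algebra_simps)
  also have "\<dots> = y^(n + 1) * ((Qpol y b (1 / S) * (S - 1) + (1 - y^2)) * S^(2 * (n + 1))
          + (S * Qpol y b S * (S - 1) - (1 - y^2) * S^2))"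
    by (rule homogeneous_recurrence_closed_form[OF NN_rec_shifted S0])
       (use NN_0 NN_2 in \<open>simp_all add: numeral_2_eq_2 mult.assoc del: NN.simps\<close>)
  also have "\<dots> = y^n * ((S - 1) * Q) * (y * S)"
    unfolding Q_def assms using S1 by (simp add: field_simps power_add power2_eq_square)
  finally have N: "(NN x y a b (2 * n + 2) * ((1 + S) * (1 - y) * (S - 1))) * S^n = y^n * ((S - 1) * Q)"
    using S0 y0 by simp
  have "(1 + S) * (1 - y) \<noteq> 0" "S - 1 \<noteq> 0"
    using assms(2) y1 S1 by auto
  moreover note arg_cong[OF G, of "\<lambda>t. t * (S - 1)"]
  ultimately show ?thesis
    unfolding strip_gf_closed_form_def Q_def[symmetric]
    by (intro div_eq_of_proportional[where \<kappa> = "(1 + S) * (1 - y) * (S - 1) * S^n" and \<nu> = "y^n * (S - 1)"])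
       (use N S0 y0 in \<open>simp_all add: Nk_def assms mult_ac power_add power_mult\<close>)
qed

lemma Nk_div_Gk_eq_closed_form:
  assumes "S \<noteq> -1"
  shows "Nk x y a b k / Gk x y a b k = strip_gf_closed_form y a b k S"
proof (cases "even k")
  case True
  then show ?thesis
    using Nk_div_Gk_even by (auto elim: evenE)
next
  case False
  then show ?thesis
    using Nk_div_Gk_odd assms by (auto elim: oddE)
qed

end

section \<open>The small root \<open>S\<close>\<close>

lemma abs_S_equation_rhs_ge:
  fixes x y :: real
  assumes x: "\<bar>x\<bar> < 1/100" and y: "\<bar>y\<bar> < 1/100" "y \<noteq> 0"
  shows "98 \<le> \<bar>(1 + x) * y + (1 - x) / y\<bar>"
proof -
  have "99 * \<bar>y\<bar> \<le> 1 - x"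
    using x y by linarith
  then have "99 \<le> \<bar>(1 - x) / y\<bar>"
    using x y by (simp add: abs_divide pos_le_divide_eq)
  moreover have "\<bar>(1 + x) * y\<bar> \<le> 2 * (1/100)"
    unfolding abs_mult by (rule mult_mono) (use x y in auto)
  ultimately show ?thesis
    by linarith
qed

lemma small_root_abs_le:
  fixes S R :: real
  assumes R: "98 \<le> \<bar>R\<bar>" and S: "\<bar>S\<bar> < 1" "S + 1 / S = R"
  shows "S \<noteq> 0" "\<bar>S\<bar> \<le> 1/50"
proof -
  show "S \<noteq> 0"
    using R S(2) by auto
  then have "\<bar>S\<bar> * \<bar>R - S\<bar> = 1"
    using S(2) by (simp add: abs_mult[symmetric] field_simps)
  moreover have "97 \<le> \<bar>R - S\<bar>"
    using R S(1) by linarith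
  ultimately have "\<bar>S\<bar> * 97 \<le> 1"
    by (metis abs_ge_zero mult_left_mono)
  then show "\<bar>S\<bar> \<le> 1/50"
    by linarith
qed

lemma small_root_exists:
  fixes R :: real
  assumes "2 < \<bar>R\<bar>"
  shows "\<exists>S. \<bar>S\<bar> < 1 \<and> S + 1 / S = R"
proof -
  define s where "s = sqrt (R^2 - 4)"
  define t where "t = (\<bar>R\<bar> - s) / 2"
  have "(2::real)^2 < \<bar>R\<bar>^2"
    by (rule power_strict_mono) (use assms in auto)
  then have s2: "s^2 = R^2 - 4" and "0 \<le> s"
    by (simp_all add: s_def)
  have "s < \<bar>R\<bar>"
    using s2 by (intro power_less_imp_less_base[of s 2]) auto
  moreover have "\<bar>R\<bar> - 2 < s"
    using s2 assms \<open>0 \<le> s\<close> by (intro power_less_imp_less_base[of _ 2 s]) (auto simp: power2_eq_square algebra_simps)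
  moreover have "(\<bar>R\<bar> - s) / 2 * ((\<bar>R\<bar> + s) / 2) = 1"
    using s2 by (simp add: field_simps power2_eq_square)
  ultimately have t: "\<bar>t\<bar> < 1" "t + 1 / t = \<bar>R\<bar>"
    by (auto simp: t_def field_simps)
  show ?thesis
  proof (cases "0 \<le> R")
    case True
    with t show ?thesis
      by auto
  next
    case False
    with t show ?thesis
      by (intro exI[of _ "- t"]) (auto simp: abs_if)
  qed
qed


lemma S_equation_consequences:
  fixes x y S :: real
  assumes "y \<noteq> 0" "S \<noteq> 0" and S: "S + 1 / S = (1 + x) * y + (1 - x) / y"
  shows "1 - x + y^2 * (1 + x) = y * (S + 1 / S)" "x * (S * (y^2 - 1)) = (S * y - 1) * (S - y)"
proof -
  show "1 - x + y^2 * (1 + x) = y * (S + 1 / S)"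
    unfolding S using assms(1) by (simp add: field_simps power2_eq_square)
  have "S^2 + 1 = S * (S + 1 / S)"
    using assms(2) by (simp add: field_simps power2_eq_square)
  then have "y * (S^2 + 1) = S * ((1 + x) * y^2 + (1 - x))"
    unfolding S using assms(1) by (simp add: field_simps power2_eq_square)
  then show "x * (S * (y^2 - 1)) = (S * y - 1) * (S - y)"
    by (simp add: algebra_simps power2_eq_square)
qed

lemma abs_mult_le:
  fixes u v p q :: real
  assumes "\<bar>u\<bar> \<le> p" "\<bar>v\<bar> \<le> q"
  shows "\<bar>u * v\<bar> \<le> p * q"
  using assms by (simp add: abs_mult mult_mono')

lemma Ppol_nonvanishing:
  fixes a b y S :: real
  assumes a: "\<bar>a\<bar> < 1/100" and b: "\<bar>b\<bar> < 1/100" and y: "\<bar>y\<bar> < 1/100"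
    and S: "\<bar>S\<bar> \<le> 1/50" "S \<noteq> 0" and k: "1 \<le> k"
  shows "1 - a + a * b * y \<noteq> 0" "Ppol y a b S - Ppol y a b (1 / S) * S^k \<noteq> 0"
    "Ppol y a b S + Ppol y a b (1 / S) * S^k \<noteq> 0"
proof -
  define a1 where "a1 = a * b + y - a * y"
  define a2 where "a2 = 1 - a + a * b * y"
  have ab: "\<bar>a * b\<bar> \<le> 1/100" "\<bar>a * y\<bar> \<le> 1/100"
    using abs_mult_le[of a "1/100" b 1] abs_mult_le[of a "1/100" y 1] a b y by simp_all
  then have "\<bar>a * b * y\<bar> \<le> 1/100"
    using abs_mult_le[of "a * b" "1/100" y 1] y by simp
  then have a2: "98/100 \<le> a2" "\<bar>a2\<bar> \<le> 102/100"
    using a unfolding a2_def by (auto simp: abs_le_iff abs_less_iff)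
  have a1: "\<bar>a1\<bar> \<le> 3/100"
    using ab y unfolding a1_def by (simp only: abs_le_iff abs_less_iff) linarith
  show "1 - a + a * b * y \<noteq> 0"
    using a2 unfolding a2_def by simp
  obtain m where m: "k = Suc m"
    using k by (cases k) auto
  have "\<bar>S^m\<bar> \<le> 1"
    using S by (simp add: power_abs power_le_one)
  then have Sk: "\<bar>S^k\<bar> \<le> 1/50"
    using abs_mult_le[OF S(1)] m by fastforce
  have "Ppol y a b S = a2 - S * a1" "Ppol y a b (1 / S) * S^k = a2 * S^k - S^m * a1"
    unfolding Ppol_def a1_def a2_def m using S(2) by (simp_all add: field_simps)
  moreover have "\<bar>S * a1\<bar> \<le> 1/50 * (3/100)" "\<bar>a2 * S^k\<bar> \<le> 102/100 * (1/50)"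
    "\<bar>S^m * a1\<bar> \<le> 1 * (3/100)"
    using abs_mult_le[OF S(1) a1] abs_mult_le[OF a2(2) Sk] abs_mult_le[OF \<open>\<bar>S^m\<bar> \<le> 1\<close> a1] .
  ultimately show "Ppol y a b S - Ppol y a b (1 / S) * S^k \<noteq> 0"
    "Ppol y a b S + Ppol y a b (1 / S) * S^k \<noteq> 0"
    using a2 by (auto simp: abs_le_iff)
qed

lemma Nk_div_Gk_at_small_root:
  fixes x y a b S :: real
  assumes x: "\<bar>x\<bar> < 1/100" and y: "\<bar>y\<bar> < 1/100" "y \<noteq> 0"
    and S: "\<bar>S\<bar> < 1" "S + 1 / S = (1 + x) * y + (1 - x) / y"
  shows "Nk x y a b k / Gk x y a b k = strip_gf_closed_form y a b k S"
proof -
  have "S \<noteq> 0" "\<bar>S\<bar> \<le> 1/50"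
    using small_root_abs_le[OF abs_S_equation_rhs_ge[OF x y] S] by auto
  moreover have "y^2 \<noteq> 1"
    using y by (auto simp: power2_eq_1_iff)
  ultimately show ?thesis
    using Nk_div_Gk_eq_closed_form S_equation_consequences(2)[OF y(2) _ S(2)] y(2) by force
qed

lemma walks_has_sum_Nk_div_Gk:
  fixes x y a b :: real
  assumes k: "1 \<le> k" and x: "\<bar>x\<bar> < 1/100" and y: "\<bar>y\<bar> < 1/100" "y \<noteq> 0"
    and ab: "\<bar>a\<bar> < 1/100" "\<bar>b\<bar> < 1/100"
  shows "((\<lambda>w. x ^ hstat k w * y ^ vstat k w * a ^ hcstat k w * b ^ vcstat k w)
           has_sum (Nk x y a b k / Gk x y a b k)) (walks k)"
proof -
  have R: "98 \<le> \<bar>(1 + x) * y + (1 - x) / y\<bar>"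
    using abs_S_equation_rhs_ge[OF x y] .
  then obtain S where S: "\<bar>S\<bar> < 1" "S + 1 / S = (1 + x) * y + (1 - x) / y"
    using small_root_exists[of "(1 + x) * y + (1 - x) / y"] by auto
  then have "S \<noteq> 0" "\<bar>S\<bar> \<le> 1/50"
    using small_root_abs_le[OF R] by auto
  then have "S^2 \<noteq> 1"
    by (auto simp: power2_eq_1_iff)
  have summable: "walk_weight x y a b k j summable_on A" for j A
    by (rule walk_weight_summable_on[where e = "1/100"]) (use x y ab in auto)
  interpret strip_system k x y a b "strip_gf x y a b k"
    "strip_gf_not_first x y a b k South" "strip_gf_not_first x y a b k North"
    using strip_system_strip_gf[OF summable] .
  have "strip_gf x y a b k 0 = strip_gf_closed_form y a b k S"
    using F_0_eq_closed_form[OF y(2) k \<open>S \<noteq> 0\<close> \<open>S^2 \<noteq> 1\<close>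
        S_equation_consequences(1)[OF y(2) \<open>S \<noteq> 0\<close> S(2)]
        Ppol_nonvanishing[OF ab y(1) \<open>\<bar>S\<bar> \<le> 1/50\<close> \<open>S \<noteq> 0\<close> k]] .
  also have "\<dots> = Nk x y a b k / Gk x y a b k"
    using Nk_div_Gk_at_small_root[OF x y S] by simp
  finally show ?thesis
    unfolding monomial_eq_walk_weight walks_eq_strip_walks
    using has_sum_infsum[OF summable, of 0 "strip_walks k 0"] by (simp add: strip_gf_def)
qed

theorem proposition2p4:
  fixes k :: nat
  assumes "k \<ge> 1"
  shows "\<exists>\<epsilon>>0. \<forall>x y a b :: real.
           \<bar>x\<bar> < \<epsilon> \<and> \<bar>y\<bar> < \<epsilon> \<and> y \<noteq> 0 \<and> \<bar>a\<bar> < \<epsilon> \<and> \<bar>b\<bar> < \<epsilon> \<longrightarrow>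
             ((\<lambda>w. x ^ hstat k w * y ^ vstat k w * a ^ hcstat k w * b ^ vcstat k w)
                 has_sum (Nk x y a b k / Gk x y a b k)) (walks k)
           \<and> (\<forall>S. \<bar>S\<bar> < 1 \<and> S + 1 / S = (1 + x) * y + (1 - x) / y \<longrightarrow>
                 Nk x y a b k / Gk x y a b k =
                   1 / (Ppol y a b (1 / S) * S ^ k + Ppol y a b S) *
                   (Qpol y b (1 / S) * S ^ k + Qpol y b S + (1 - y^2) * (S ^ k - S) / (S - 1)))"
  using walks_has_sum_Nk_div_Gk[OF assms] Nk_div_Gk_at_small_root
  by (intro exI[of _ "1/100"]) (simp add: strip_gf_closed_form_def)

end
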